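(* Let $X$ be a finitely stable rack acting on a set $M$. Then for any stabilizing family $(u_1,\ldots,u_s)$ of $X$, we have $(m\cdot x)\cdot(u_i)_i=(m\cdot(u_i)_i)\cdot x$ for all $m\in M$ and $x\in X$.
   Context: A rack is a set $X$ with a binary operation $\rhd$ such that each $x\mapsto x\rhd y$ is bijective and $(x\rhd y)\rhd z=(x\rhd z)\rhd(y\rhd z)$. A stabilizing family of $X$ is a finite family $(u_1,\ldots,u_s)$ with $(\cdots(x\rhd u_1)\cdots)\rhd u_s=x$ for all $x$; $X$ is finitely stable if it has one. A rack action of $X$ on a set $M$ is a map $M\times X\to M$, $(m,x)\mapsto m\cdot x$, such that each $m\mapsto m\cdot x$ is a bijection, $(m\cdot x)\cdot y=(m\cdot y)\cdot(x\rhd y)$ for all $m,x,y$, and for every stabilizing family $(u_1,\ldots,u_s)$ and every cyclic shift $\sigma$ of $\{1,\ldots,s\}$, $m\cdot(u_i)_i=m\cdot(u_{\sigma(i)})_i$. Here $m\cdot(x_i)_i:=(\cdots(m\cdot x_1)\cdots)\cdot x_s$. *)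

theory Defs
  imports Main
begin

definition is_rack :: "('x \<Rightarrow> 'x \<Rightarrow> 'x) \<Rightarrow> bool" where
  "is_rack r \<longleftrightarrow> (\<forall>y. bij (\<lambda>x. r x y)) \<and>
     (\<forall>x y z. r (r x y) z = r (r x z) (r y z))"

definition rack_iter :: "('x \<Rightarrow> 'x \<Rightarrow> 'x) \<Rightarrow> 'x \<Rightarrow> 'x list \<Rightarrow> 'x" where
  "rack_iter r x us = foldl r x us"

definition stabilizing_family :: "('x \<Rightarrow> 'x \<Rightarrow> 'x) \<Rightarrow> 'x list \<Rightarrow> bool" where
  "stabilizing_family r us \<longleftrightarrow> (\<forall>x. rack_iter r x us = x)"

definition finitely_stable :: "('x \<Rightarrow> 'x \<Rightarrow> 'x) \<Rightarrow> bool" where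
  "finitely_stable r \<longleftrightarrow> (\<exists>us. stabilizing_family r us)"

definition act_iter :: "('m \<Rightarrow> 'x \<Rightarrow> 'm) \<Rightarrow> 'm \<Rightarrow> 'x list \<Rightarrow> 'm" where
  "act_iter a m xs = foldl a m xs"

text \<open>Rack action of rack r (on type 'x) on the set M (the whole type 'm).
  Cyclic shifts of {1..s} are realised by list rotations.\<close>
definition rack_action :: "('x \<Rightarrow> 'x \<Rightarrow> 'x) \<Rightarrow> ('m \<Rightarrow> 'x \<Rightarrow> 'm) \<Rightarrow> bool" where
  "rack_action r a \<longleftrightarrow> (\<forall>x. bij (\<lambda>m. a m x)) \<and>
     (\<forall>m x y. a (a m x) y = a (a m y) (r x y)) \<and>
     (\<forall>us k m. stabilizing_family r us \<longrightarrow> act_iter a m us = act_iter a m (rotate k us))"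

end

theory Submission
  imports Defs
begin

text \<open>Pushing m \<cdot> x through a family one element at a time, the compatibility
  axiom (m \<cdot> x) \<cdot> y = (m \<cdot> y) \<cdot> (x \<rhd> y) replaces x by x \<rhd> u at each step, so
  x comes out acted on by the whole family; for a stabilizing family it comes
  out unchanged.\<close>

lemma act_iter_act_commute:
  assumes compat: "\<And>m x y. a (a m x) y = a (a m y) (r x y)"
  shows "act_iter a (a m x) us = a (act_iter a m us) (rack_iter r x us)"
proof (induction us arbitrary: m x)
  case Nil
  show ?case by (simp add: act_iter_def rack_iter_def)
next
  case (Cons u us)
  have "act_iter a (a m x) (u # us) = act_iter a (a (a m u) (r x u)) us"
    unfolding act_iter_def foldl_Cons compat[of m x u] ..
  also have "\<dots> = a (act_iter a (a m u) us) (rack_iter r (r x u) us)"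
    by (rule Cons.IH)
  also have "\<dots> = a (act_iter a m (u # us)) (rack_iter r x (u # us))"
    by (simp add: act_iter_def rack_iter_def)
  finally show ?case .
qed

theorem mainTheorem17:
  fixes r :: "'x \<Rightarrow> 'x \<Rightarrow> 'x" and a :: "'m \<Rightarrow> 'x \<Rightarrow> 'm"
  assumes "is_rack r" and "finitely_stable r" and "rack_action r a"
    and "stabilizing_family r us"
  shows "\<forall>m x. act_iter a (a m x) us = a (act_iter a m us) x"
proof (intro allI)
  fix m x
  have compat: "\<And>m x y. a (a m x) y = a (a m y) (r x y)"
    using \<open>rack_action r a\<close> unfolding rack_action_def by blast
  have "rack_iter r x us = x"
    using \<open>stabilizing_family r us\<close> unfolding stabilizing_family_def by blast
  then show "act_iter a (a m x) us = a (act_iter a m us) x"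
    using act_iter_act_commute[of a r m x us, OF compat] by simp
qed

end
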